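(* Let $U_1$ be a vector space concentrated in degree $1$ (hence odd), set $U_0=\mathrm{End}(U_1)$ and recursively $U_{-p+1}=\mathrm{Hom}(U_1,U_{-p+2})$ for $p\ge 2$, and $U_{1-}=\bigoplus_{k\le1}U_k$. Define brackets $U_i\otimes U_j\to U_{i+j}$ for $i+j\le 1$ recursively by $[x,u]=x(u)$, $[u,x]=-(-1)^{|x|}x(u)$, and $[x,y](u)=[x,y(u)]+(-1)^{|y|}[x(u),y]$ for $x,y\in U_{0-}=\bigoplus_{k\le0}U_k$ and $u\in U_1$. Then $U_{1-}$ with this bracket is a semilocal Lie superalgebra (in particular $U_0=\mathfrak{gl}(U_1)$ as a Lie algebra).
   Context: All vector spaces are over $\mathbb{K}=\mathbb{R}$ or $\mathbb{C}$, $\mathbb{Z}$-graded, with parity equal to degree mod 2; $|x|$ is the degree. A semilocal Lie superalgebra is a graded space concentrated in degrees $\le 1$ with bilinear brackets $A_i\otimes A_j\to A_{i+j}$ defined whenever $i+j\le1$, satisfying $[x,y]=-(-1)^{|x||y|}[y,x]$ and $[x,[y,z]]-(-1)^{|x||y|}[y,[x,z]]=[[x,y],z]$ whenever all brackets involved are defined. *)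

theory Defs
  imports Complex_Main "HOL-Library.Function_Algebras"
begin

text \<open>A homogeneous element of U_k (k \<le> 1) is represented as a function on
argument lists: an element of U_1 is a vector v, represented by the function that
is v on the empty list and 0 elsewhere; an element x of U_k with k \<le> 0 is
represented by the function (u # us) \<mapsto> (x(u))(us), and [] \<mapsto> 0.
Thus x(u) = app x u.\<close>

type_synonym 'v mlin = "'v list \<Rightarrow> 'v"

definition vec_elt :: "'v::zero \<Rightarrow> 'v mlin" where
  "vec_elt v = (\<lambda>xs. if xs = [] then v else 0)"

definition app :: "'v mlin \<Rightarrow> 'v \<Rightarrow> 'v mlin" where
  "app x u = (\<lambda>xs. x (u # xs))"

text \<open>Uar scale m is U_{1-m}: Uar 0 = U_1, Uar (Suc m) = Hom(U_1, Uar m)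
(linear maps, via currying).\<close>
fun Uar :: "('k::field \<Rightarrow> 'v::ab_group_add \<Rightarrow> 'v) \<Rightarrow> nat \<Rightarrow> 'v mlin set" where
  "Uar scale 0 = range vec_elt"
| "Uar scale (Suc m) =
     {x. x [] = 0 \<and> (\<forall>u. app x u \<in> Uar scale m) \<and>
         (\<forall>a b u w. app x (scale a u + scale b w) =
                     (\<lambda>xs. scale a (app x u xs) + scale b (app x w xs)))}"

definition U :: "('k::field \<Rightarrow> 'v::ab_group_add \<Rightarrow> 'v) \<Rightarrow> int \<Rightarrow> 'v mlin set" where
  "U scale k = (if k \<le> 1 then Uar scale (nat (1 - k)) else {0})"

definition deg :: "nat \<Rightarrow> int" where "deg m = 1 - int m"

definition sgnv :: "int \<Rightarrow> 'a::ab_group_add \<Rightarrow> 'a" where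
  "sgnv k v = (if even k then v else - v)"

text \<open>The recursively defined bracket, indexed by numbers of arguments
(i.e. degrees 1 - m and 1 - n):
  [x,u] = x(u), [u,x] = -(-1)^|x| x(u),
  [x,y](u) = [x,y(u)] + (-1)^|y| [x(u),y].\<close>
fun brk :: "nat \<Rightarrow> nat \<Rightarrow> 'v::ab_group_add mlin \<Rightarrow> 'v mlin \<Rightarrow> 'v mlin" where
  "brk 0 0 x y = 0"
| "brk (Suc m) 0 x y = app x (y [])"
| "brk 0 (Suc n) x y = - sgnv (deg (Suc n)) (app y (x []))"
| "brk (Suc m) (Suc n) x y =
     (\<lambda>xs. case xs of [] \<Rightarrow> 0
        | u # us \<Rightarrow> (brk (Suc m) n x (app y u)
                    + sgnv (deg (Suc n)) (brk m (Suc n) (app x u) y)) us)"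

definition br :: "int \<Rightarrow> int \<Rightarrow> 'v::ab_group_add mlin \<Rightarrow> 'v mlin \<Rightarrow> 'v mlin" where
  "br i j x y = brk (nat (1 - i)) (nat (1 - j)) x y"

text \<open>Parity = degree mod 2.\<close>
definition semilocal_lie_superalgebra ::
  "('k::field \<Rightarrow> 'a::ab_group_add \<Rightarrow> 'a) \<Rightarrow> (int \<Rightarrow> 'a set) \<Rightarrow> (int \<Rightarrow> int \<Rightarrow> 'a \<Rightarrow> 'a \<Rightarrow> 'a) \<Rightarrow> bool"
where
  "semilocal_lie_superalgebra smult A b \<longleftrightarrow>
     vector_space smult \<and>
     (\<forall>k\<le>1. 0 \<in> A k \<and> (\<forall>x\<in>A k. \<forall>y\<in>A k. x + y \<in> A k) \<and> (\<forall>c. \<forall>x\<in>A k. smult c x \<in> A k)) \<and>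
     (\<forall>i j. i \<le> 1 \<and> j \<le> 1 \<and> i + j \<le> 1 \<longrightarrow>
        (\<forall>x\<in>A i. \<forall>y\<in>A j. b i j x y \<in> A (i + j)) \<and>
        (\<forall>x\<in>A i. \<forall>x'\<in>A i. \<forall>y\<in>A j. b i j (x + x') y = b i j x y + b i j x' y) \<and>
        (\<forall>x\<in>A i. \<forall>y\<in>A j. \<forall>y'\<in>A j. b i j x (y + y') = b i j x y + b i j x y') \<and>
        (\<forall>c. \<forall>x\<in>A i. \<forall>y\<in>A j. b i j (smult c x) y = smult c (b i j x y)) \<and>
        (\<forall>c. \<forall>x\<in>A i. \<forall>y\<in>A j. b i j x (smult c y) = smult c (b i j x y)) \<and>
        (\<forall>x\<in>A i. \<forall>y\<in>A j. b i j x y = - sgnv (i * j) (b j i y x))) \<and>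
     (\<forall>i j k. i \<le> 1 \<and> j \<le> 1 \<and> k \<le> 1 \<and> i + j \<le> 1 \<and> j + k \<le> 1 \<and> i + k \<le> 1
              \<and> i + j + k \<le> 1 \<longrightarrow>
        (\<forall>x\<in>A i. \<forall>y\<in>A j. \<forall>z\<in>A k.
           b i (j + k) x (b j k y z) - sgnv (i * j) (b j (i + k) y (b i k x z))
             = b (i + j) k (b i j x y) z))"

end

(*
  Two elements of degree \<le> 0 coincide as soon as they agree after insertion of every
  u \<in> U_1, and inserting u into [x,y] produces only brackets of smaller total size.  Hence
  antisymmetry, bilinearity, closure and the Jacobi identity all follow by induction on the total
  number of arguments.  The base cases are those in which one entry is a vector u \<in> U_1; there
  the defining formula [x,u] = x(u) settles the identity directly.
*)

theory Submission
  imports Defs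
begin

declare brk.simps(4) [simp del]

lemma sgnv_simps [simp]:
  "sgnv k (a + b) = sgnv k a + sgnv k b"
  "sgnv k (- a) = - sgnv k a"
  "sgnv k (a - b) = sgnv k a - sgnv k b"
  "sgnv k (sgnv k a) = a"
  "sgnv k 0 = 0"
  "sgnv k f xs = sgnv k (f xs)"
  by (auto simp: sgnv_def)

lemma app_simps [simp]:
  "app (f + g) u = app f u + app g u"
  "app (f - g) u = app f u - app g u"
  "app (- f) u = - app f u"
  "app 0 u = 0"
  "app (sgnv k f) u = sgnv k (app f u)"
  by (auto simp: app_def sgnv_def fun_eq_iff)

lemma app_apply: "app f u xs = f (u # xs)"
  by (simp add: app_def)

lemma mlin_eqI:
  assumes "f [] = g []" and "\<And>u. app f u = app g u"
  shows "f = g"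
proof
  fix xs show "f xs = g xs"
    using assms by (cases xs) (auto simp: app_def fun_eq_iff)
qed

lemma deg_0 [simp]: "deg 0 = 1"
  by (simp add: deg_def)

lemma brk_Suc_Suc_Nil: "brk (Suc m) (Suc n) x y [] = 0"
  by (simp add: brk.simps(4))

lemma app_brk_Suc_Suc:
  "app (brk (Suc m) (Suc n) x y) u =
     brk (Suc m) n x (app y u) + sgnv (deg (Suc n)) (brk m (Suc n) (app x u) y)"
  by (simp add: app_def brk.simps(4) fun_eq_iff)

lemma brk_antisym: "brk m n x y = - sgnv (deg m * deg n) (brk n m y x)"
proof (induction "m + n" arbitrary: m n x y rule: less_induct)
  case less
  show ?case
  proof (cases m)
    case 0
    then show ?thesis by (cases n) (simp_all add: deg_def)
  next
    case m: (Suc m')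
    show ?thesis
    proof (cases n)
      case 0
      then show ?thesis using m by (simp add: deg_def sgnv_def)
    next
      case n: (Suc n')
      show ?thesis
      proof (rule mlin_eqI)
        fix u
        have "brk (Suc m') n' x (app y u) =
            - sgnv (deg (Suc m') * deg n') (brk n' (Suc m') (app y u) x)"
          using less(1)[of "Suc m'" n' x "app y u"] m n by simp
        moreover have "brk m' (Suc n') (app x u) y =
            - sgnv (deg m' * deg (Suc n')) (brk (Suc n') m' y (app x u))"
          using less(1)[of m' "Suc n'" "app x u" y] m n by simp
        ultimately show "app (brk m n x y) u = app (- sgnv (deg m * deg n) (brk n m y x)) u"
          unfolding m n app_brk_Suc_Suc app_simps
          by (cases "even m'"; cases "even n'") (auto simp: sgnv_def deg_def algebra_simps)
      qed (simp add: m n brk_Suc_Suc_Nil)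
    qed
  qed
qed

lemma brk_jacobi_vector_right:
  "brk (Suc a) b x (brk (Suc b) 0 y z)
     - sgnv (deg (Suc a) * deg (Suc b)) (brk (Suc b) a y (brk (Suc a) 0 x z))
   = brk (Suc (a + b)) 0 (brk (Suc a) (Suc b) x y) z"
  using brk_antisym[of "Suc b" a y "app x (z [])"]
  by (cases "even a"; cases "even b") (simp_all add: app_brk_Suc_Suc sgnv_def deg_def)

definition mscale :: "('k \<Rightarrow> 'v \<Rightarrow> 'v) \<Rightarrow> 'k \<Rightarrow> 'v mlin \<Rightarrow> 'v mlin" where
  "mscale sc c f = (\<lambda>xs. sc c (f xs))"

context vector_space
begin

lemma mscale_apply: "mscale scale c f xs = scale c (f xs)"
  by (simp add: mscale_def)

lemma mscale_simps [simp]: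
  "mscale scale c (f + g) = mscale scale c f + mscale scale c g"
  "mscale scale c (- f) = - mscale scale c f"
  "mscale scale c 0 = 0"
  "mscale scale c (sgnv k f) = sgnv k (mscale scale c f)"
  "mscale scale 1 f = f"
  "mscale scale 0 f = 0"
  "mscale scale (-1) f = - f"
  "app (mscale scale c f) u = mscale scale c (app f u)"
  by (auto simp: mscale_def sgnv_def app_def fun_eq_iff scale_right_distrib)

lemma vector_space_mscale: "vector_space (mscale scale)"
  by unfold_locales (simp_all add: fun_eq_iff mscale_apply scale_right_distrib scale_left_distrib)

lemma Uar_Suc_iff:
  "x \<in> Uar scale (Suc m) \<longleftrightarrow> x [] = 0 \<and> (\<forall>u. app x u \<in> Uar scale m) \<and>
     (\<forall>a b u w. app x (scale a u + scale b w) =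
        mscale scale a (app x u) + mscale scale b (app x w))"
  by (simp add: fun_eq_iff mscale_apply)

lemma Uar_app: "x \<in> Uar scale (Suc m) \<Longrightarrow> app x u \<in> Uar scale m"
  by simp

lemma Uar_0_Cons: "z \<in> Uar scale 0 \<Longrightarrow> z (v # vs) = 0"
  by (auto simp: vec_elt_def)

lemma app_linear_arg:
  "x \<in> Uar scale (Suc m) \<Longrightarrow>
     app x (scale a u + scale b w) = mscale scale a (app x u) + mscale scale b (app x w)"
  unfolding Uar_Suc_iff by blast

lemma Uar_zero: "0 \<in> Uar scale m"
proof (induction m)
  case 0
  have "vec_elt 0 = 0" by (simp add: vec_elt_def fun_eq_iff)
  then show ?case by (metis Uar.simps(1) rangeI)
qed (simp add: app_def zero_fun_def)

lemma Uar_lincomb: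
  "x \<in> Uar scale m \<Longrightarrow> y \<in> Uar scale m \<Longrightarrow> mscale scale a x + mscale scale b y \<in> Uar scale m"
proof (induction m arbitrary: x y)
  case 0
  then obtain v w where "x = vec_elt v" "y = vec_elt w" by auto
  then have "mscale scale a x + mscale scale b y = vec_elt (scale a v + scale b w)"
    by (simp add: vec_elt_def fun_eq_iff mscale_apply)
  then show ?case by (metis Uar.simps(1) rangeI)
next
  case (Suc m)
  show ?case
    unfolding Uar_Suc_iff
  proof (intro conjI allI)
    show "(mscale scale a x + mscale scale b y) [] = 0"
      using Suc.prems by (simp add: mscale_apply)
  next
    fix u
    show "app (mscale scale a x + mscale scale b y) u \<in> Uar scale m"
      unfolding app_simps mscale_simps
      using Suc.IH[OF Uar_app Uar_app] Suc.prems .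
  next
    fix a' b' u w
    let ?v = "mscale scale a x + mscale scale b y"
    show "app ?v (scale a' u + scale b' w) = mscale scale a' (app ?v u) + mscale scale b' (app ?v w)"
      using app_linear_arg[OF Suc.prems(1), of a' u b' w]
        app_linear_arg[OF Suc.prems(2), of a' u b' w]
      by (simp add: fun_eq_iff mscale_apply scale_right_distrib mult.commute add_ac)
  qed
qed

lemma Uar_add: "x \<in> Uar scale m \<Longrightarrow> y \<in> Uar scale m \<Longrightarrow> x + y \<in> Uar scale m"
  using Uar_lincomb[of x m y 1 1] by simp

lemma Uar_mscale: "x \<in> Uar scale m \<Longrightarrow> mscale scale c x \<in> Uar scale m"
  using Uar_lincomb[of x m 0 c 0] Uar_zero by simp

lemma Uar_uminus: "x \<in> Uar scale m \<Longrightarrow> - x \<in> Uar scale m"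
  using Uar_mscale[of x m "-1"] by simp

lemma Uar_sgnv: "x \<in> Uar scale m \<Longrightarrow> sgnv k x \<in> Uar scale m"
  by (simp add: sgnv_def Uar_uminus)

lemma brk_linear_left:
  "y \<in> Uar scale n \<Longrightarrow>
     brk m n (mscale scale a x + mscale scale b x') y =
       mscale scale a (brk m n x y) + mscale scale b (brk m n x' y)"
proof (induction "m + n" arbitrary: m n x x' y rule: less_induct)
  case less
  show ?case
  proof (cases m)
    case m: 0
    show ?thesis
    proof (cases n)
      case 0
      then show ?thesis using m by simp
    next
      case n: (Suc n')
      have "(mscale scale a x + mscale scale b x') [] = scale a (x []) + scale b (x' [])"
        by (simp add: mscale_apply)
      then show ?thesis
        using app_linear_arg[of y n'] less.prems m n by simp
    qed
  next
    case m: (Suc m')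
    show ?thesis
    proof (cases n)
      case 0
      then show ?thesis using m by simp
    next
      case n: (Suc n')
      have y: "y \<in> Uar scale (Suc n')"
        using less.prems n by simp
      show ?thesis
      proof (rule mlin_eqI)
        fix u
        have "brk (Suc m') n' (mscale scale a x + mscale scale b x') (app y u) =
            mscale scale a (brk (Suc m') n' x (app y u)) +
            mscale scale b (brk (Suc m') n' x' (app y u))"
          using less(1)[of "Suc m'" n' "app y u" x x'] m n Uar_app[OF y] by simp
        moreover have "brk m' (Suc n') (mscale scale a (app x u) + mscale scale b (app x' u)) y =
            mscale scale a (brk m' (Suc n') (app x u) y) +
            mscale scale b (brk m' (Suc n') (app x' u) y)"
          using less(1)[of m' "Suc n'" y "app x u" "app x' u"] m n y by simp
        ultimately show "app (brk m n (mscale scale a x + mscale scale b x') y) u =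
            app (mscale scale a (brk m n x y) + mscale scale b (brk m n x' y)) u"
          unfolding m n app_brk_Suc_Suc app_simps mscale_simps by (simp add: algebra_simps)
      qed (simp add: m n brk_Suc_Suc_Nil mscale_apply)
    qed
  qed
qed

lemma brk_linear_right:
  assumes "x \<in> Uar scale m"
  shows "brk m n x (mscale scale a y + mscale scale b y') =
       mscale scale a (brk m n x y) + mscale scale b (brk m n x y')"
proof -
  have "brk m n x (mscale scale a y + mscale scale b y') =
      - sgnv (deg m * deg n) (brk n m (mscale scale a y + mscale scale b y') x)"
    by (rule brk_antisym)
  also have "\<dots> =
      - sgnv (deg m * deg n) (mscale scale a (brk n m y x) + mscale scale b (brk n m y' x))"
    using brk_linear_left[OF assms] by simp
  also have "\<dots> = mscale scale a (brk m n x y) + mscale scale b (brk m n x y')"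
    using brk_antisym[of n m y x] brk_antisym[of n m y' x] by (simp add: mult.commute)
  finally show ?thesis .
qed

lemma brk_add_left: "y \<in> Uar scale n \<Longrightarrow> brk m n (x + x') y = brk m n x y + brk m n x' y"
  using brk_linear_left[of y n m 1 x 1 x'] by simp

lemma brk_add_right: "x \<in> Uar scale m \<Longrightarrow> brk m n x (y + y') = brk m n x y + brk m n x y'"
  using brk_linear_right[of x m n 1 y 1 y'] by simp

lemma brk_mscale_left: "y \<in> Uar scale n \<Longrightarrow> brk m n (mscale scale c x) y = mscale scale c (brk m n x y)"
  using brk_linear_left[of y n m c x 0 x] by simp

lemma brk_mscale_right: "x \<in> Uar scale m \<Longrightarrow> brk m n x (mscale scale c y) = mscale scale c (brk m n x y)"
  using brk_linear_right[of x m n c y 0 y] by simp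

lemma brk_sgnv_left: "y \<in> Uar scale n \<Longrightarrow> brk m n (sgnv k x) y = sgnv k (brk m n x y)"
  using brk_mscale_left[of y n m "-1" x] by (simp add: sgnv_def)

lemma brk_sgnv_right: "x \<in> Uar scale m \<Longrightarrow> brk m n x (sgnv k y) = sgnv k (brk m n x y)"
  using brk_mscale_right[of x m n "-1" y] by (simp add: sgnv_def)

lemma brk_uminus_left: "y \<in> Uar scale n \<Longrightarrow> brk m n (- x) y = - brk m n x y"
  using brk_sgnv_left[of y n m 1 x] by (simp add: sgnv_def)

lemma brk_uminus_right: "x \<in> Uar scale m \<Longrightarrow> brk m n x (- y) = - brk m n x y"
  using brk_sgnv_right[of x m n 1 y] by (simp add: sgnv_def)

lemma brk_in_Uar:
  "x \<in> Uar scale m \<Longrightarrow> y \<in> Uar scale n \<Longrightarrow> 1 \<le> m + n \<Longrightarrow> brk m n x y \<in> Uar scale (m + n - 1)"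
proof (induction "m + n" arbitrary: m n x y rule: less_induct)
  case less
  show ?case
  proof (cases m)
    case m: 0
    then obtain n' where n: "n = Suc n'"
      using less.prems by (cases n) auto
    show ?thesis
      using Uar_uminus[OF Uar_sgnv[OF Uar_app]] less.prems m n by simp
  next
    case m: (Suc m')
    have x: "x \<in> Uar scale (Suc m')"
      using less.prems m by simp
    show ?thesis
    proof (cases n)
      case 0
      then show ?thesis using m x by simp
    next
      case n: (Suc n')
      have y: "y \<in> Uar scale (Suc n')"
        using less.prems n by simp
      have "brk (Suc m') (Suc n') x y \<in> Uar scale (Suc (m' + n'))"
        unfolding Uar_Suc_iff
      proof (intro conjI allI)
        fix u
        have "brk (Suc m') n' x (app y u) \<in> Uar scale (m' + n')"
          using less(1)[of "Suc m'" n' x "app y u"] x Uar_app[OF y] m n by simp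
        moreover have "brk m' (Suc n') (app x u) y \<in> Uar scale (m' + n')"
          using less(1)[of m' "Suc n'" "app x u" y] y Uar_app[OF x] m n by simp
        ultimately show "app (brk (Suc m') (Suc n') x y) u \<in> Uar scale (m' + n')"
          unfolding app_brk_Suc_Suc by (intro Uar_add Uar_sgnv)
      next
        fix a b u w
        show "app (brk (Suc m') (Suc n') x y) (scale a u + scale b w) =
            mscale scale a (app (brk (Suc m') (Suc n') x y) u) +
            mscale scale b (app (brk (Suc m') (Suc n') x y) w)"
          unfolding app_brk_Suc_Suc app_linear_arg[OF x] app_linear_arg[OF y]
            brk_linear_left[OF y] brk_linear_right[OF x]
          by (simp add: algebra_simps)
      qed (rule brk_Suc_Suc_Nil)
      then show ?thesis
        using m n by simp
    qed
  qed
qed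

lemma brk_jacobi_vector_left:
  assumes y: "y \<in> Uar scale (Suc b)" and z: "z \<in> Uar scale (Suc c)"
  shows "brk 0 (Suc (b + c)) x (brk (Suc b) (Suc c) y z)
           - sgnv (deg (Suc b)) (brk (Suc b) c y (brk 0 (Suc c) x z))
         = brk b (Suc c) (brk 0 (Suc b) x y) z"
  by (cases "even b"; cases "even c")
    (simp_all add: app_brk_Suc_Suc sgnv_def deg_def brk_uminus_left[OF z] brk_uminus_right[OF y]
      brk_add_right[OF y] brk_add_left[OF z])

lemma brk_jacobi_vector_middle:
  assumes x: "x \<in> Uar scale (Suc a)"
  shows "brk (Suc a) c x (brk 0 (Suc c) y z)
           - sgnv (deg (Suc a)) (brk 0 (Suc (a + c)) y (brk (Suc a) (Suc c) x z))
         = brk a (Suc c) (brk (Suc a) 0 x y) z"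
  by (cases "even a"; cases "even c")
    (simp_all add: app_brk_Suc_Suc sgnv_def deg_def brk_uminus_right[OF x] brk_add_right[OF x])

lemma brk_jacobi:
  "x \<in> Uar scale a \<Longrightarrow> y \<in> Uar scale b \<Longrightarrow> z \<in> Uar scale c \<Longrightarrow>
   1 \<le> a + b \<Longrightarrow> 1 \<le> b + c \<Longrightarrow> 1 \<le> a + c \<Longrightarrow>
   brk a (b + c - 1) x (brk b c y z) - sgnv (deg a * deg b) (brk b (a + c - 1) y (brk a c x z))
     = brk (a + b - 1) c (brk a b x y) z"
proof (induction "a + b + c" arbitrary: a b c x y z rule: less_induct)
  case less
  consider "a = 0" | "b = 0" | "c = 0" | a' b' c' where "a = Suc a'" "b = Suc b'" "c = Suc c'"
    by (metis not0_implies_Suc)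
  then show ?case
  proof cases
    case 1
    then obtain b' c' where "b = Suc b'" "c = Suc c'"
      using less.prems by (metis add_0 not0_implies_Suc not_one_le_zero)
    with 1 show ?thesis
      using brk_jacobi_vector_left less.prems by simp
  next
    case 2
    then obtain a' c' where "a = Suc a'" "c = Suc c'"
      using less.prems by (metis add_0 not0_implies_Suc not_one_le_zero)
    with 2 show ?thesis
      using brk_jacobi_vector_middle less.prems by simp
  next
    case 3
    then obtain a' b' where "a = Suc a'" "b = Suc b'"
      using less.prems by (metis add_0 not0_implies_Suc not_one_le_zero)
    with 3 show ?thesis
      using brk_jacobi_vector_right by simp
  next
    case 4
    txt \<open>Applied to u, both sides expand via the recursion; the induction hypothesis for u inserted
      into z, y and x respectively (J1, J2, J3) matches the resulting terms.\<close>
    have x: "x \<in> Uar scale (Suc a')" and y: "y \<in> Uar scale (Suc b')"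
      and z: "z \<in> Uar scale (Suc c')"
      using less.prems 4 by simp_all
    show ?thesis
      unfolding 4 add_Suc add_Suc_right diff_Suc_1
    proof (rule mlin_eqI)
      fix u
      have J1: "brk (Suc (a' + b')) c' (brk (Suc a') (Suc b') x y) (app z u) =
          brk (Suc a') (b' + c') x (brk (Suc b') c' y (app z u)) -
          sgnv (deg (Suc a') * deg (Suc b'))
            (brk (Suc b') (a' + c') y (brk (Suc a') c' x (app z u)))"
        using less(1)[of "Suc a'" "Suc b'" c' x y "app z u"] x y Uar_app[OF z] 4 by simp
      have J2: "brk (a' + b') (Suc c') (brk (Suc a') b' x (app y u)) z =
          brk (Suc a') (b' + c') x (brk b' (Suc c') (app y u) z) -
          sgnv (deg (Suc a') * deg b')
            (brk b' (Suc (a' + c')) (app y u) (brk (Suc a') (Suc c') x z))"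
        using less(1)[of "Suc a'" b' "Suc c'" x "app y u" z] x Uar_app[OF y] z 4 by simp
      have J3: "brk (a' + b') (Suc c') (brk a' (Suc b') (app x u) y) z =
          brk a' (Suc (b' + c')) (app x u) (brk (Suc b') (Suc c') y z) -
          sgnv (deg a' * deg (Suc b')) (brk (Suc b') (a' + c') y (brk a' (Suc c') (app x u) z))"
        using less(1)[of a' "Suc b'" "Suc c'" "app x u" y z] Uar_app[OF x] y z 4 by simp
      show "app (brk (Suc a') (Suc (b' + c')) x (brk (Suc b') (Suc c') y z) -
             sgnv (deg (Suc a') * deg (Suc b'))
               (brk (Suc b') (Suc (a' + c')) y (brk (Suc a') (Suc c') x z))) u =
          app (brk (Suc (a' + b')) (Suc c') (brk (Suc a') (Suc b') x y) z) u"
        unfolding app_simps app_brk_Suc_Suc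
          brk_add_right[OF x] brk_add_right[OF y] brk_add_left[OF z]
          brk_sgnv_right[OF x] brk_sgnv_right[OF y] brk_sgnv_left[OF z] J1 J2 J3
        by (cases "even a'"; cases "even b'"; cases "even c'")
          (simp_all add: sgnv_def deg_def algebra_simps)
    qed (simp add: brk_Suc_Suc_Nil)
  qed
qed

lemma brk_1_1_eq_commutator:
  assumes x: "x \<in> Uar scale 1" and y: "y \<in> Uar scale 1"
  shows "brk 1 1 x y = (\<lambda>xs. case xs of [u] \<Rightarrow> x [y [u]] - y [x [u]] | _ \<Rightarrow> 0)"
proof (rule mlin_eqI)
  fix u
  have "x (v # w # ws) = 0" "y (v # w # ws) = 0" for v w ws
    using Uar_0_Cons[OF Uar_app[of x 0]] Uar_0_Cons[OF Uar_app[of y 0]] x y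
    by (simp_all add: app_apply)
  moreover have "app (brk 1 1 x y) u = app x (y [u]) - app y (x [u])"
    using app_brk_Suc_Suc[of 0 0 x y u] by (simp add: deg_def sgnv_def app_apply)
  ultimately show "app (brk 1 1 x y) u =
      app (\<lambda>xs. case xs of [u] \<Rightarrow> x [y [u]] - y [x [u]] | _ \<Rightarrow> 0) u"
    by (simp add: app_def fun_eq_iff split: list.split)
qed (simp add: brk_Suc_Suc_Nil)

lemma U_eq_Uar: "k \<le> 1 \<Longrightarrow> U scale k = Uar scale (nat (1 - k))"
  by (simp add: U_def)

lemma deg_nat_one_minus: "k \<le> 1 \<Longrightarrow> deg (nat (1 - k)) = k"
  by (simp add: deg_def)

lemma nat_one_minus_add:
  "i \<le> 1 \<Longrightarrow> j \<le> 1 \<Longrightarrow> i + j \<le> 1 \<Longrightarrow>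
     nat (1 - (i + j)) = nat (1 - i) + nat (1 - j) - 1 \<and> 1 \<le> nat (1 - i) + nat (1 - j)"
  by linarith

lemma br_in_U:
  "i \<le> 1 \<Longrightarrow> j \<le> 1 \<Longrightarrow> i + j \<le> 1 \<Longrightarrow> x \<in> U scale i \<Longrightarrow> y \<in> U scale j \<Longrightarrow>
     br i j x y \<in> U scale (i + j)"
  using nat_one_minus_add[of i j] brk_in_Uar by (simp add: U_eq_Uar br_def)

lemma br_antisym: "i \<le> 1 \<Longrightarrow> j \<le> 1 \<Longrightarrow> br i j x y = - sgnv (i * j) (br j i y x)"
  using brk_antisym[of "nat (1 - i)" "nat (1 - j)" x y] by (simp add: br_def deg_nat_one_minus)

lemma br_jacobi:
  assumes "i \<le> 1" "j \<le> 1" "k \<le> 1" "i + j \<le> 1" "j + k \<le> 1" "i + k \<le> 1"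
    and "x \<in> U scale i" "y \<in> U scale j" "z \<in> U scale k"
  shows "br i (j + k) x (br j k y z) - sgnv (i * j) (br j (i + k) y (br i k x z))
           = br (i + j) k (br i j x y) z"
  using assms nat_one_minus_add[of i j] nat_one_minus_add[of j k] nat_one_minus_add[of i k]
    brk_jacobi[of x "nat (1 - i)" y "nat (1 - j)" z "nat (1 - k)"]
  by (simp add: U_eq_Uar br_def deg_nat_one_minus)

lemma semilocal_lie_superalgebra_U: "semilocal_lie_superalgebra (mscale scale) (U scale) br"
  unfolding semilocal_lie_superalgebra_def
  by (intro conjI allI impI ballI; (elim conjE)?; (rule br_in_U br_antisym br_jacobi; assumption)?)
    (simp_all add: vector_space_mscale U_eq_Uar Uar_zero Uar_add Uar_mscale br_def
      brk_add_left brk_add_right brk_mscale_left brk_mscale_right)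

end

theorem proposition3p1:
  fixes scale :: "'k::field \<Rightarrow> 'v::ab_group_add \<Rightarrow> 'v"
  assumes "vector_space scale"
  shows "semilocal_lie_superalgebra (\<lambda>c f xs. scale c (f xs)) (U scale) br
         \<and> (\<forall>x\<in>U scale 0. \<forall>y\<in>U scale 0.
              br 0 0 x y = (\<lambda>xs. case xs of [u] \<Rightarrow> x [y [u]] - y [x [u]] | _ \<Rightarrow> 0))"
proof -
  interpret vector_space scale by fact
  have "(\<lambda>c f xs. scale c (f xs)) = mscale scale"
    by (simp add: fun_eq_iff mscale_def)
  moreover have "U scale 0 = Uar scale 1" and "br 0 0 x y = brk 1 1 x y" for x y :: "'v mlin"
    by (simp_all add: U_def br_def)
  ultimately show ?thesis
    using semilocal_lie_superalgebra_U brk_1_1_eq_commutator by (simp del: Uar.simps)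
qed

end
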